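(* Assume $\mathbf A$ has full column rank, $\mathrm{var}(\tilde{\mathbf x})>0$, $\mathrm{var}(\tilde{\mathbf y})>0$, and $\boldsymbol\Pi_{\mathbf A}^\perp\dot{\mathbf a}_{\mathrm u}(\tilde{\mathbf q},\mathbf r_k)\neq\mathbf 0$, $\boldsymbol\Pi_{\mathbf A}^\perp\dot{\mathbf a}_{\mathrm v}(\tilde{\mathbf q},\mathbf r_k)\neq\mathbf 0$. Then for each $k$, $$\omega_{\mathrm u,k}\le\frac{4\pi^2N}{\lambda^2}\Big(\mathrm{var}(\tilde{\mathbf x})-\frac{\mathrm{cov}(\tilde{\mathbf x},\tilde{\mathbf y})^2}{\mathrm{var}(\tilde{\mathbf y})}\Big),\qquad \omega_{\mathrm v,k}\le\frac{4\pi^2N}{\lambda^2}\Big(\mathrm{var}(\tilde{\mathbf y})-\frac{\mathrm{cov}(\tilde{\mathbf x},\tilde{\mathbf y})^2}{\mathrm{var}(\tilde{\mathbf x})}\Big),$$ with equality in the first inequality if and only if $\mathbf A^{\mathsf H}\boldsymbol\Pi_k^\perp\big(\dot{\mathbf a}_{\mathrm u}(\tilde{\mathbf q},\mathbf r_k)-\zeta^*_{\mathrm u,k}\dot{\mathbf a}_{\mathrm v}(\tilde{\mathbf q},\mathbf r_k)\big)=\mathbf 0_{K\times1}$, and equality in the second if and only if $\mathbf A^{\mathsf H}\boldsymbol\Pi_k^\perp\big(\dot{\mathbf a}_{\mathrm v}(\tilde{\mathbf q},\mathbf r_k)-\zeta^*_{\mathrm v,k}\dot{\mathbf a}_{\mathrm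 u}(\tilde{\mathbf q},\mathbf r_k)\big)=\mathbf 0_{K\times1}$.
   Context: Fix $N>K\ge1$, $\lambda>0$. Antenna positions $\mathbf q_n=[x_n,y_n]^{\mathsf T}\in\mathbb R^2$ ($n=1,\dots,N$), $\tilde{\mathbf x}=[x_1,\dots,x_N]^{\mathsf T}$, $\tilde{\mathbf y}=[y_1,\dots,y_N]^{\mathsf T}$; target coordinates $\mathbf r_k=[u_k,v_k]^{\mathsf T}\in\mathbb R^2$, $k=1,\dots,K$. Steering vector $\mathbf a(\tilde{\mathbf q},\mathbf r)\in\mathbb C^N$ with $n$-th entry $e^{\mathrm j\frac{2\pi}{\lambda}\mathbf q_n^{\mathsf T}\mathbf r}$; $\mathbf A=[\mathbf a(\tilde{\mathbf q},\mathbf r_1),\dots,\mathbf a(\tilde{\mathbf q},\mathbf r_K)]$. $\dot{\mathbf a}_{\mathrm u}(\tilde{\mathbf q},\mathbf r_k)$ has $n$-th entry $\mathrm j\frac{2\pi}{\lambda}x_ne^{\mathrm j\frac{2\pi}{\lambda}\mathbf q_n^{\mathsf T}\mathbf r_k}$ and $\dot{\mathbf a}_{\mathrm v}(\tilde{\mathbf q},\mathbf r_k)$ has $n$-th entry $\mathrm j\frac{2\pi}{\lambda}y_ne^{\mathrm j\frac{2\pi}{\lambda}\mathbf q_n^{\mathsf T}\mathbf r_k}$. $\boldsymbol\Pi_{\mathbf A}^\perp=\mathbf I_N-\mathbf A(\mathbf A^{\mathsf H}\mathbf A)^{-1}\mathbf A^{\mathsf H}$ and $\boldsymbol\Pi_k^\perp=\mathbf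 I_N-\mathbf a(\tilde{\mathbf q},\mathbf r_k)\mathbf a(\tilde{\mathbf q},\mathbf r_k)^{\mathsf H}/\|\mathbf a(\tilde{\mathbf q},\mathbf r_k)\|_2^2$. Effective sensitivity powers: $\omega_{\mathrm u,k}=\min_{\zeta\in\mathbb R}\|\boldsymbol\Pi_{\mathbf A}^\perp(\dot{\mathbf a}_{\mathrm u}(\tilde{\mathbf q},\mathbf r_k)-\zeta\dot{\mathbf a}_{\mathrm v}(\tilde{\mathbf q},\mathbf r_k))\|_2^2=\|\boldsymbol\Pi_{\mathbf A}^\perp\dot{\mathbf a}_{\mathrm u}\|_2^2-\frac{\Re\{\dot{\mathbf a}_{\mathrm u}^{\mathsf H}\boldsymbol\Pi_{\mathbf A}^\perp\dot{\mathbf a}_{\mathrm v}\}^2}{\|\boldsymbol\Pi_{\mathbf A}^\perp\dot{\mathbf a}_{\mathrm v}\|_2^2}$ and $\omega_{\mathrm v,k}=\min_{\zeta\in\mathbb R}\|\boldsymbol\Pi_{\mathbf A}^\perp(\dot{\mathbf a}_{\mathrm v}-\zeta\dot{\mathbf a}_{\mathrm u})\|_2^2=\|\boldsymbol\Pi_{\mathbf A}^\perp\dot{\mathbf a}_{\mathrm v}\|_2^2-\frac{\Re\{\dot{\mathbf a}_{\mathrm u}^{\mathsf H}\boldsymbol\Pi_{\mathbf A}^\perp\dot{\mathbf a}_{\mathrm v}\}^2}{\|\boldsymbol\Pi_{\mathbf A}^\perp\dot{\mathbf a}_{\mathrm u}\|_2^2}$ (all vectors evaluated at $(\tilde{\mathbf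 q},\mathbf r_k)$). Further $\zeta^*_{\mathrm u,k}=\frac{\Re\{\dot{\mathbf a}_{\mathrm u}^{\mathsf H}\boldsymbol\Pi_k^\perp\dot{\mathbf a}_{\mathrm v}\}}{\|\boldsymbol\Pi_k^\perp\dot{\mathbf a}_{\mathrm v}\|_2^2}$ and $\zeta^*_{\mathrm v,k}=\frac{\Re\{\dot{\mathbf a}_{\mathrm u}^{\mathsf H}\boldsymbol\Pi_k^\perp\dot{\mathbf a}_{\mathrm v}\}}{\|\boldsymbol\Pi_k^\perp\dot{\mathbf a}_{\mathrm u}\|_2^2}$. $\mu(\tilde{\mathbf x})=\frac1N\sum_nx_n$, $\mathrm{var}(\tilde{\mathbf x})=\frac1N\sum_n(x_n-\mu(\tilde{\mathbf x}))^2$ (same for $\tilde{\mathbf y}$), $\mathrm{cov}(\tilde{\mathbf x},\tilde{\mathbf y})=\frac1N\sum_n(x_n-\mu(\tilde{\mathbf x}))(y_n-\mu(\tilde{\mathbf y}))$. *)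

theory Defs
  imports "HOL-Analysis.Analysis"
begin

text \<open>Antennas indexed by a finite type 'n (N = CARD('n)), targets by a finite type 'k
  (K = CARD('k)). Antenna n is at (x n, y n); target k is at (u k, v k).\<close>

definition cinner :: "complex^'n \<Rightarrow> complex^'n \<Rightarrow> complex" where
  "cinner a b = (\<Sum>i\<in>UNIV. cnj (a$i) * b$i)"

definition normsq :: "complex^'n \<Rightarrow> real" where
  "normsq a = (\<Sum>i\<in>UNIV. (cmod (a$i))^2)"

definition hermitian_transpose :: "complex^'n^'m \<Rightarrow> complex^'m^'n" where
  "hermitian_transpose M = (\<chi> i j. cnj (M$j$i))"

definition steer :: "real \<Rightarrow> ('n \<Rightarrow> real) \<Rightarrow> ('n \<Rightarrow> real) \<Rightarrow> real \<Rightarrow> real \<Rightarrow> complex^'n" where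
  "steer lam x y u v = (\<chi> n. cis (2*pi/lam * (x n * u + y n * v)))"

definition steer_du :: "real \<Rightarrow> ('n \<Rightarrow> real) \<Rightarrow> ('n \<Rightarrow> real) \<Rightarrow> real \<Rightarrow> real \<Rightarrow> complex^'n" where
  "steer_du lam x y u v = (\<chi> n. \<i> * complex_of_real (2*pi/lam * x n) * cis (2*pi/lam * (x n * u + y n * v)))"

definition steer_dv :: "real \<Rightarrow> ('n \<Rightarrow> real) \<Rightarrow> ('n \<Rightarrow> real) \<Rightarrow> real \<Rightarrow> real \<Rightarrow> complex^'n" where
  "steer_dv lam x y u v = (\<chi> n. \<i> * complex_of_real (2*pi/lam * y n) * cis (2*pi/lam * (x n * u + y n * v)))"

definition steer_mat :: "real \<Rightarrow> ('n \<Rightarrow> real) \<Rightarrow> ('n \<Rightarrow> real) \<Rightarrow> ('k \<Rightarrow> real) \<Rightarrow> ('k \<Rightarrow> real) \<Rightarrow> complex^'k^'n" where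
  "steer_mat lam x y u v = (\<chi> n k. steer lam x y (u k) (v k) $ n)"

definition proj_perp :: "complex^'k^'n \<Rightarrow> complex^'n^'n" where
  "proj_perp A = mat 1 - A ** matrix_inv (hermitian_transpose A ** A) ** hermitian_transpose A"

definition proj_perp_vec :: "complex^'n \<Rightarrow> complex^'n^'n" where
  "proj_perp_vec a = mat 1 - (\<chi> i j. a$i * cnj (a$j) / complex_of_real (normsq a))"

definition mean :: "('n::finite \<Rightarrow> real) \<Rightarrow> real" where
  "mean x = (\<Sum>n\<in>UNIV. x n) / real CARD('n)"

definition var :: "('n::finite \<Rightarrow> real) \<Rightarrow> real" where
  "var x = (\<Sum>n\<in>UNIV. (x n - mean x)^2) / real CARD('n)"

definition cov :: "('n::finite \<Rightarrow> real) \<Rightarrow> ('n \<Rightarrow> real) \<Rightarrow> real" where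
  "cov x y = (\<Sum>n\<in>UNIV. (x n - mean x) * (y n - mean y)) / real CARD('n)"

definition omega_u :: "real \<Rightarrow> ('n::finite \<Rightarrow> real) \<Rightarrow> ('n \<Rightarrow> real) \<Rightarrow> ('k::finite \<Rightarrow> real) \<Rightarrow> ('k \<Rightarrow> real) \<Rightarrow> 'k \<Rightarrow> real" where
  "omega_u lam x y u v k = (INF \<zeta>::real. normsq (proj_perp (steer_mat lam x y u v) *v
      (steer_du lam x y (u k) (v k) - complex_of_real \<zeta> *s steer_dv lam x y (u k) (v k))))"

definition omega_v :: "real \<Rightarrow> ('n::finite \<Rightarrow> real) \<Rightarrow> ('n \<Rightarrow> real) \<Rightarrow> ('k::finite \<Rightarrow> real) \<Rightarrow> ('k \<Rightarrow> real) \<Rightarrow> 'k \<Rightarrow> real" where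
  "omega_v lam x y u v k = (INF \<zeta>::real. normsq (proj_perp (steer_mat lam x y u v) *v
      (steer_dv lam x y (u k) (v k) - complex_of_real \<zeta> *s steer_du lam x y (u k) (v k))))"

definition zeta_u :: "real \<Rightarrow> ('n::finite \<Rightarrow> real) \<Rightarrow> ('n \<Rightarrow> real) \<Rightarrow> real \<Rightarrow> real \<Rightarrow> real" where
  "zeta_u lam x y uk vk = (let P = proj_perp_vec (steer lam x y uk vk);
      au = steer_du lam x y uk vk; av = steer_dv lam x y uk vk
    in Re (cinner au (P *v av)) / normsq (P *v av))"

definition zeta_v :: "real \<Rightarrow> ('n::finite \<Rightarrow> real) \<Rightarrow> ('n \<Rightarrow> real) \<Rightarrow> real \<Rightarrow> real \<Rightarrow> real" where
  "zeta_v lam x y uk vk = (let P = proj_perp_vec (steer lam x y uk vk);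
      au = steer_du lam x y uk vk; av = steer_dv lam x y uk vk
    in Re (cinner au (P *v av)) / normsq (P *v au))"

end

(*
  Write a for the k-th column of A and c = 2 pi / lam. Both derivative vectors have the form
  j c diag(g) a with |a_n| = 1, and Pi_A^perp a = 0, so the means of x and y drop out:
  Pi_A^perp (a_u - zeta a_v) = Pi_A^perp (w - (zeta - zeta0) b) with b = j c diag(y - mu(y)) a and
  w = j c diag(x - mu(x) - zeta0 (y - mu(y))) a = Pi_k^perp (a_u - zeta0 a_v), where
  zeta0 = cov(x,y) / var(y). This choice makes w orthogonal to b, and |w|^2 is exactly the bound.
  For an orthogonal projection P and w orthogonal to b, inf_t |P (w - t b)|^2 <= |P w|^2 <= |w|^2;
  equality forces P w = w, i.e. A^H w = 0, and conversely P w = w gives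
  |P (w - t b)|^2 = |w|^2 + t^2 |P b|^2 because <w, P b> = <P w, b> = 0.
*)

theory Submission
  imports Defs
begin

section \<open>Orthogonal projections in real inner product spaces\<close>

context
  fixes P :: "'a::real_inner \<Rightarrow> 'a"
  assumes P_linear: "linear P"
    and P_self_adjoint: "\<And>v w. inner (P v) w = inner v (P w)"
    and P_idem: "\<And>v. P (P v) = P v"
begin

lemma norm_projection_Pythagorean: "(norm w)\<^sup>2 = (norm (P w))\<^sup>2 + (norm (w - P w))\<^sup>2"
proof -
  have "orthogonal (P w) (w - P w)"
    unfolding orthogonal_def inner_diff_right by (metis P_self_adjoint P_idem inner_commute diff_self)
  then show ?thesis
    using norm_add_Pythagorean[of "P w" "w - P w"] by simp
qed

lemma norm_projection_le: "norm (P w) \<le> norm w"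
proof (rule power2_le_imp_le)
  show "(norm (P w))\<^sup>2 \<le> (norm w)\<^sup>2"
    using norm_projection_Pythagorean[of w] zero_le_power2[of "norm (w - P w)"] by linarith
qed simp

lemma norm_projection_eq_iff: "norm (P w) = norm w \<longleftrightarrow> P w = w"
proof -
  have "norm (P w) = norm w \<longleftrightarrow> (norm (P w))\<^sup>2 = (norm w)\<^sup>2"
    by (simp add: power2_eq_iff_nonneg)
  also have "\<dots> \<longleftrightarrow> norm (w - P w) = 0"
    using norm_projection_Pythagorean[of w] by (metis add_cancel_left_right zero_eq_power2)
  finally show ?thesis
    by auto
qed

lemma INF_norm_projection_residual:
  assumes orth: "inner w b = 0"
  shows "(INF t. (norm (P (w - t *\<^sub>R b)))\<^sup>2) \<le> (norm w)\<^sup>2" (is "?I \<le> _")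
    and "(INF t. (norm (P (w - t *\<^sub>R b)))\<^sup>2) = (norm w)\<^sup>2 \<longleftrightarrow> P w = w"
proof -
  have bdd: "bdd_below (range (\<lambda>t. (norm (P (w - t *\<^sub>R b)))\<^sup>2))"
    by (rule bdd_belowI2[of _ 0]) simp
  have I_le: "?I \<le> (norm (P w))\<^sup>2"
    using cINF_lower[OF bdd, of 0] by simp
  have "(norm (P w))\<^sup>2 \<le> (norm w)\<^sup>2"
    by (rule power_mono[OF norm_projection_le norm_ge_zero])
  with I_le show le: "?I \<le> (norm w)\<^sup>2"
    by linarith
  show "?I = (norm w)\<^sup>2 \<longleftrightarrow> P w = w"
  proof
    assume "?I = (norm w)\<^sup>2"
    with I_le have "(norm w)\<^sup>2 \<le> (norm (P w))\<^sup>2"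
      by linarith
    then have "norm w \<le> norm (P w)"
      by (rule power2_le_imp_le) simp
    then show "P w = w"
      using norm_projection_le[of w] norm_projection_eq_iff by (metis antisym)
  next
    assume fixed: "P w = w"
    have "orthogonal w (P b)"
      using orth unfolding orthogonal_def by (metis fixed P_self_adjoint)
    have "(norm w)\<^sup>2 \<le> (norm (P (w - t *\<^sub>R b)))\<^sup>2" for t
    proof -
      have "P (w - t *\<^sub>R b) = w + (- t) *\<^sub>R P b"
        using fixed by (simp add: linear_diff[OF P_linear] linear_scale[OF P_linear])
      then have "(norm (P (w - t *\<^sub>R b)))\<^sup>2 = (norm w)\<^sup>2 + (norm ((- t) *\<^sub>R P b))\<^sup>2"
        using norm_add_Pythagorean orthogonal_clauses(2)[OF \<open>orthogonal w (P b)\<close>] by metis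
      then show ?thesis
        by (metis le_add_same_cancel1 zero_le_power2)
    qed
    then have "(norm w)\<^sup>2 \<le> ?I"
      by (rule cINF_greatest[OF UNIV_not_empty])
    with le show "?I = (norm w)\<^sup>2"
      by simp
  qed
qed

end

lemma INF_shift: "(INF t. F (t - s)) = (INF t::real. F t)"
proof -
  have "range (\<lambda>t. F (t - s)) = F ` range (\<lambda>t. t - s)"
    by (rule image_image[of F "\<lambda>t. t - s", symmetric])
  then show ?thesis
    by simp
qed

section \<open>The projector onto the orthogonal complement of the column space\<close>

lemma normsq_eq_inner: "normsq a = inner a a"
  unfolding normsq_def inner_vec_def by (simp add: power2_norm_eq_inner)

lemma normsq_eq_norm_power2: "normsq a = (norm a)\<^sup>2"
  by (simp add: normsq_eq_inner power2_norm_eq_inner)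

lemma Re_cinner: "Re (cinner a b) = inner a b"
  unfolding cinner_def inner_vec_def by (simp add: Re_sum inner_complex_def)

lemma hermitian_transpose_hermitian_transpose [simp]:
  "hermitian_transpose (hermitian_transpose M) = M"
  by (simp add: hermitian_transpose_def vec_eq_iff)

lemma cinner_matrix_vector_mult:
  "cinner a (M *v b) = cinner (hermitian_transpose M *v a) b"
proof -
  have "cinner a (M *v b) = (\<Sum>i\<in>UNIV. \<Sum>j\<in>UNIV. cnj (a$i) * M$i$j * b$j)"
    unfolding cinner_def matrix_vector_mult_def by (simp add: sum_distrib_left mult_ac)
  also have "\<dots> = (\<Sum>j\<in>UNIV. \<Sum>i\<in>UNIV. cnj (a$i) * M$i$j * b$j)"
    by (rule sum.swap)
  also have "\<dots> = cinner (hermitian_transpose M *v a) b"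
    unfolding cinner_def matrix_vector_mult_def hermitian_transpose_def
    by (simp add: sum_distrib_right sum_distrib_left mult_ac)
  finally show ?thesis .
qed

lemma of_real_vector_scalar_mult: "complex_of_real t *s v = t *\<^sub>R v"
  by (simp add: vec_eq_iff scaleR_conv_of_real[where 'a=complex])

lemma inner_complex_eq_Re_cnj_mult: "inner z w = Re (cnj z * w)"
  by (simp add: inner_complex_def)

lemma full_rank_injective_gen:
  fixes A :: "'a::field^'n^'m"
  shows "rank A = CARD('n) \<longleftrightarrow> inj ((*v) A)"
  by (simp add: matrix_left_invertible_injective [symmetric] matrix_left_invertible_span_rows_gen
      row_rank_def_gen vec.dim_eq_full [symmetric] card_cart_basis vec.dimension_def)

lemma invertible_gram_matrix:
  fixes A :: "complex^'k^'n"
  assumes "rank A = CARD('k)"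
  shows "invertible (hermitian_transpose A ** A)"
proof -
  have "z = 0" if "(hermitian_transpose A ** A) *v z = 0" for z
  proof -
    have "cinner z ((hermitian_transpose A ** A) *v z) = cinner (A *v z) (A *v z)"
      by (simp add: cinner_matrix_vector_mult flip: matrix_vector_mul_assoc)
    then have "inner (A *v z) (A *v z) = Re (cinner z ((hermitian_transpose A ** A) *v z))"
      by (simp add: Re_cinner)
    then have "A *v z = 0"
      using that by (simp add: cinner_def)
    with assms show "z = 0"
      by (metis full_rank_injective_gen inj_eq matrix_vector_mult_0_right)
  qed
  then show ?thesis
    by (simp add: invertible_left_inverse matrix_left_invertible_ker)
qed

lemma matrix_inv_invertible:
  assumes "invertible M"
  shows "M ** matrix_inv M = mat 1" and "matrix_inv M ** M = mat 1"
  using someI_ex[OF assms[unfolded invertible_def]] by (simp_all add: matrix_inv_def)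

context
  fixes A :: "complex^'k^'n"
  assumes gram: "invertible (hermitian_transpose A ** A)"
begin

lemma proj_perp_apply:
  "proj_perp A *v w = w - A *v (matrix_inv (hermitian_transpose A ** A) *v (hermitian_transpose A *v w))"
  by (simp add: proj_perp_def matrix_vector_mult_diff_rdistrib matrix_vector_mul_assoc matrix_mul_assoc)

lemma hermitian_transpose_proj_perp: "hermitian_transpose A *v (proj_perp A *v w) = 0"
proof -
  let ?G = "hermitian_transpose A ** A"
  have "hermitian_transpose A *v (A *v (matrix_inv ?G *v v)) = (?G ** matrix_inv ?G) *v v" for v
    by (simp add: matrix_vector_mul_assoc matrix_mul_assoc)
  then have "hermitian_transpose A *v (A *v (matrix_inv ?G *v v)) = v" for v
    by (simp add: matrix_inv_invertible(1)[OF gram])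
  then show ?thesis
    by (simp add: proj_perp_apply matrix_vector_mult_diff_distrib)
qed

lemma proj_perp_range: "proj_perp A *v (A *v z) = 0"
proof -
  let ?G = "hermitian_transpose A ** A"
  have "matrix_inv ?G *v (hermitian_transpose A *v (A *v z)) = (matrix_inv ?G ** ?G) *v z"
    by (simp add: matrix_vector_mul_assoc matrix_mul_assoc)
  then show ?thesis
    by (simp add: proj_perp_apply matrix_inv_invertible(2)[OF gram])
qed

lemma proj_perp_eq_self_iff: "proj_perp A *v w = w \<longleftrightarrow> hermitian_transpose A *v w = 0"
  by (metis hermitian_transpose_proj_perp proj_perp_apply diff_zero matrix_vector_mult_0_right)

lemma proj_perp_idem: "proj_perp A *v (proj_perp A *v w) = proj_perp A *v w"
  using hermitian_transpose_proj_perp proj_perp_eq_self_iff by blast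

lemma inner_proj_perp_range: "inner (proj_perp A *v w) (A *v z) = 0"
proof -
  have "cinner (proj_perp A *v w) (A *v z) = 0"
    unfolding cinner_matrix_vector_mult hermitian_transpose_proj_perp by (simp add: cinner_def)
  then show ?thesis
    by (metis Re_cinner zero_complex.simps(1))
qed

lemma inner_proj_perp_commute: "inner (proj_perp A *v v) w = inner v (proj_perp A *v w)"
proof -
  have "inner (proj_perp A *v v) w = inner (proj_perp A *v v) (proj_perp A *v w)" for v w
  proof -
    have "w = proj_perp A *v w + A *v (matrix_inv (hermitian_transpose A ** A) *v (hermitian_transpose A *v w))"
      by (simp add: proj_perp_apply)
    then show ?thesis
      by (metis inner_add_right inner_proj_perp_range add_0_right)
  qed
  then show ?thesis
    by (metis inner_commute)
qed

end

section \<open>Centred positions and weighted steering vectors\<close>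

definition centred :: "('n::finite \<Rightarrow> real) \<Rightarrow> 'n \<Rightarrow> real" where
  "centred g n = g n - mean g"

lemma sum_centred: "(\<Sum>n\<in>UNIV. centred g n) = 0"
  by (simp add: centred_def sum_subtractf mean_def)

lemma sum_centred_mult_centred:
  fixes f g :: "'n::finite \<Rightarrow> real"
  shows "(\<Sum>n\<in>UNIV. centred f n * centred g n) = real CARD('n) * cov f g"
  by (simp add: cov_def centred_def)

lemma sum_mult_centred:
  fixes f g :: "'n::finite \<Rightarrow> real"
  shows "(\<Sum>n\<in>UNIV. f n * centred g n) = real CARD('n) * cov f g"
proof -
  have "(\<Sum>n\<in>UNIV. f n * centred g n) = (\<Sum>n\<in>UNIV. centred f n * centred g n + mean f * centred g n)"
    by (rule sum.cong) (simp_all add: centred_def algebra_simps)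
  also have "\<dots> = (\<Sum>n\<in>UNIV. centred f n * centred g n)"
    by (simp add: sum.distrib sum_centred flip: sum_distrib_left)
  finally show ?thesis
    by (simp add: sum_centred_mult_centred)
qed

lemma sum_centred_power2:
  fixes g :: "'n::finite \<Rightarrow> real"
  shows "(\<Sum>n\<in>UNIV. (centred g n)\<^sup>2) = real CARD('n) * var g"
  by (simp add: var_def centred_def)

lemma cov_commute: "cov f g = cov g f"
  by (simp add: cov_def mult.commute)

lemma cov_self: "cov g g = var g"
  by (simp add: cov_def var_def power2_eq_square)

definition weighted_steer :: "real \<Rightarrow> ('n \<Rightarrow> real) \<Rightarrow> complex^'n \<Rightarrow> complex^'n" where
  "weighted_steer c g a = (\<chi> n. \<i> * complex_of_real (c * g n) * a $ n)"

lemma weighted_steer_diff: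
  "weighted_steer c f a - t *\<^sub>R weighted_steer c g a = weighted_steer c (\<lambda>n. f n - t * g n) a"
  by (simp add: weighted_steer_def vec_eq_iff algebra_simps flip: of_real_vector_scalar_mult)

lemma weighted_steer_centred:
  "weighted_steer c g a = weighted_steer c (centred g) a + (\<i> * complex_of_real (c * mean g)) *s a"
  by (simp add: weighted_steer_def centred_def vec_eq_iff algebra_simps)

context
  fixes a :: "complex^'n::finite"
  assumes unimodular: "\<And>n. cmod (a $ n) = 1"
begin

lemma mult_cnj_unimodular: "a $ n * cnj (a $ n) = 1"
  by (metis complex_norm_square of_real_1 one_power2 unimodular)

lemma cnj_mult_unimodular: "cnj (a $ n) * a $ n = 1"
  by (metis mult.commute mult_cnj_unimodular)

lemma inner_weighted_steer:
  "inner (weighted_steer c f a) (weighted_steer c g a) = c\<^sup>2 * (\<Sum>n\<in>UNIV. f n * g n)"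
proof -
  have "inner (\<i> * complex_of_real (c * f n) * a $ n) (\<i> * complex_of_real (c * g n) * a $ n)
      = c\<^sup>2 * (f n * g n)" for n
  proof -
    have "cnj (\<i> * complex_of_real (c * f n) * a $ n) * (\<i> * complex_of_real (c * g n) * a $ n)
        = complex_of_real (c\<^sup>2 * (f n * g n)) * (cnj (a $ n) * a $ n)"
      by (simp add: algebra_simps power2_eq_square)
    then show ?thesis
      by (simp add: inner_complex_eq_Re_cnj_mult cnj_mult_unimodular)
  qed
  then show ?thesis
    by (simp add: inner_vec_def weighted_steer_def sum_distrib_left)
qed

lemma proj_perp_vec_weighted_steer:
  "proj_perp_vec a *v weighted_steer c g a = weighted_steer c (centred g) a"
proof -
  let ?N = "complex_of_real (real CARD('n))"
  let ?B = "(\<chi> i j. a $ i * cnj (a $ j) / ?N) :: complex^'n^'n"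
  have "normsq a = real CARD('n)"
    by (simp add: normsq_def unimodular)
  then have proj: "proj_perp_vec a = mat 1 - ?B"
    by (simp add: proj_perp_vec_def)
  have "(\<Sum>j\<in>UNIV. a $ i * cnj (a $ j) / ?N * (\<i> * complex_of_real (c * g j) * a $ j))
      = \<i> * complex_of_real (c * mean g) * a $ i" for i
  proof -
    have "(\<Sum>j\<in>UNIV. a $ i * cnj (a $ j) / ?N * (\<i> * complex_of_real (c * g j) * a $ j))
        = (\<Sum>j\<in>UNIV. \<i> * complex_of_real c * a $ i / ?N * complex_of_real (g j))"
    proof (rule sum.cong)
      fix j
      have "a $ i * cnj (a $ j) / ?N * (\<i> * complex_of_real (c * g j) * a $ j)
          = \<i> * complex_of_real c * a $ i / ?N * complex_of_real (g j) * (cnj (a $ j) * a $ j)"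
        by (simp add: ac_simps)
      then show "a $ i * cnj (a $ j) / ?N * (\<i> * complex_of_real (c * g j) * a $ j)
          = \<i> * complex_of_real c * a $ i / ?N * complex_of_real (g j)"
        by (simp add: cnj_mult_unimodular)
    qed simp
    also have "\<dots> = \<i> * complex_of_real c * a $ i / ?N * complex_of_real (\<Sum>j\<in>UNIV. g j)"
      by (simp only: sum_distrib_left of_real_sum)
    also have "\<dots> = \<i> * complex_of_real (c * mean g) * a $ i"
      by (simp add: mean_def)
    finally show ?thesis .
  qed
  then have "?B *v weighted_steer c g a = (\<i> * complex_of_real (c * mean g)) *s a"
    unfolding matrix_vector_mult_def weighted_steer_def vec_eq_iff
    by (simp only: vec_lambda_beta vector_scalar_mult_def) simp
  then show ?thesis
    by (simp add: proj matrix_vector_mult_diff_rdistrib weighted_steer_centred[of c g a])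
qed

lemma proj_perp_vec_weighted_steer_diff:
  "proj_perp_vec a *v (weighted_steer c f a - complex_of_real t *s weighted_steer c g a)
    = weighted_steer c (\<lambda>n. centred f n - t * centred g n) a"
  unfolding matrix_vector_mult_diff_distrib vector_scalar_commute proj_perp_vec_weighted_steer
  unfolding of_real_vector_scalar_mult by (rule weighted_steer_diff)

lemma Re_cinner_proj_perp_vec_weighted_steer:
  "Re (cinner (weighted_steer c f a) (proj_perp_vec a *v weighted_steer c g a))
    = c\<^sup>2 * real CARD('n) * cov f g"
  by (simp add: Re_cinner proj_perp_vec_weighted_steer inner_weighted_steer
      sum_mult_centred)

lemma normsq_proj_perp_vec_weighted_steer:
  "normsq (proj_perp_vec a *v weighted_steer c g a) = c\<^sup>2 * real CARD('n) * var g"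
  by (simp add: normsq_eq_inner proj_perp_vec_weighted_steer
      inner_weighted_steer sum_centred_mult_centred cov_self)

end

lemma proj_perp_weighted_steer_centred:
  assumes "proj_perp A *v a = 0"
  shows "proj_perp A *v weighted_steer c g a = proj_perp A *v weighted_steer c (centred g) a"
  using assms by (subst weighted_steer_centred) (simp add: matrix_vector_right_distrib vector_scalar_commute)

lemma INF_proj_perp_weighted_steer:
  fixes A :: "complex^'k^'n" and a :: "complex^'n" and c :: real and f g :: "'n \<Rightarrow> real"
  assumes gram: "invertible (hermitian_transpose A ** A)"
    and unimodular: "\<And>n. cmod (a $ n) = 1"
    and annihilated: "proj_perp A *v a = 0"
    and var_pos: "var g > 0"
  defines "w \<equiv> weighted_steer c (\<lambda>n. centred f n - cov f g / var g * centred g n) a"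
  shows "(INF t. normsq (proj_perp A *v (weighted_steer c f a - complex_of_real t *s weighted_steer c g a)))
      \<le> c\<^sup>2 * real CARD('n) * (var f - (cov f g)\<^sup>2 / var g)" (is "?I \<le> ?bound")
    and "(INF t. normsq (proj_perp A *v (weighted_steer c f a - complex_of_real t *s weighted_steer c g a)))
      = c\<^sup>2 * real CARD('n) * (var f - (cov f g)\<^sup>2 / var g)
      \<longleftrightarrow> hermitian_transpose A *v w = 0"
proof -
  let ?P = "\<lambda>v. proj_perp A *v v"
  define \<zeta> where "\<zeta> = cov f g / var g"
  have w_\<zeta>: "w = weighted_steer c (\<lambda>n. centred f n - \<zeta> * centred g n) a"
    unfolding w_def \<zeta>_def ..
  define b where "b = weighted_steer c (centred g) a"
  have w_eq: "w = weighted_steer c (centred f) a - \<zeta> *\<^sub>R b"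
    by (simp add: w_\<zeta> b_def weighted_steer_diff)
  have shift: "?P (weighted_steer c f a - complex_of_real t *s weighted_steer c g a)
      = ?P (w - (t - \<zeta>) *\<^sub>R b)" for t
  proof -
    have "w - (t - \<zeta>) *\<^sub>R b = weighted_steer c (centred f) a - complex_of_real t *s b"
      by (simp add: w_eq of_real_vector_scalar_mult algebra_simps)
    then show ?thesis
      using proj_perp_weighted_steer_centred[OF annihilated]
      by (simp add: b_def matrix_vector_mult_diff_distrib vector_scalar_commute)
  qed
  have "inner w b = c\<^sup>2 * (\<Sum>n\<in>UNIV. (centred f n - \<zeta> * centred g n) * centred g n)"
    by (simp add: w_\<zeta> b_def inner_weighted_steer[OF unimodular])
  also have "(\<Sum>n\<in>UNIV. (centred f n - \<zeta> * centred g n) * centred g n)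
      = (\<Sum>n\<in>UNIV. centred f n * centred g n) - \<zeta> * (\<Sum>n\<in>UNIV. (centred g n)\<^sup>2)"
    by (simp add: left_diff_distrib sum_subtractf sum_distrib_left power2_eq_square mult.assoc)
  also have "\<dots> = 0"
    using var_pos by (simp add: \<zeta>_def sum_centred_mult_centred sum_centred_power2)
  finally have orth: "inner w b = 0"
    by simp
  have "(norm w)\<^sup>2 = c\<^sup>2 * (\<Sum>n\<in>UNIV. (centred f n - \<zeta> * centred g n)\<^sup>2)"
    unfolding power2_norm_eq_inner w_\<zeta> inner_weighted_steer[OF unimodular] by (simp add: power2_eq_square)
  also have "(\<Sum>n\<in>UNIV. (centred f n - \<zeta> * centred g n)\<^sup>2)
      = (\<Sum>n\<in>UNIV. (centred f n)\<^sup>2) - 2 * \<zeta> * (\<Sum>n\<in>UNIV. centred f n * centred g n)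
        + \<zeta>\<^sup>2 * (\<Sum>n\<in>UNIV. (centred g n)\<^sup>2)"
    by (simp add: power2_diff sum.distrib sum_subtractf sum_distrib_left power_mult_distrib mult_ac)
  also have "c\<^sup>2 * \<dots> = ?bound"
    using var_pos by (simp add: \<zeta>_def sum_centred_mult_centred sum_centred_power2 cov_self field_simps power2_eq_square)
  finally have norm_w: "(norm w)\<^sup>2 = ?bound" .
  have I_eq: "?I = (INF t. (norm (?P (w - t *\<^sub>R b)))\<^sup>2)"
    unfolding shift normsq_eq_norm_power2 by (rule INF_shift)
  have proj: "linear ?P" "\<And>v v'. inner (?P v) v' = inner v (?P v')" "\<And>v. ?P (?P v) = ?P v"
    using inner_proj_perp_commute[OF gram] proj_perp_idem[OF gram]
    by (auto intro: bounded_linear.linear)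
  show "?I \<le> ?bound"
    using INF_norm_projection_residual(1)[OF proj orth] by (simp add: I_eq norm_w)
  show "?I = ?bound \<longleftrightarrow> hermitian_transpose A *v w = 0"
    using INF_norm_projection_residual(2)[OF proj orth] proj_perp_eq_self_iff[OF gram]
    by (simp add: I_eq norm_w)
qed

lemma steer_du_eq_weighted_steer:
  "steer_du lam x y u v = weighted_steer (2 * pi / lam) x (steer lam x y u v)"
  by (simp add: steer_du_def weighted_steer_def steer_def)

lemma steer_dv_eq_weighted_steer:
  "steer_dv lam x y u v = weighted_steer (2 * pi / lam) y (steer lam x y u v)"
  by (simp add: steer_dv_def weighted_steer_def steer_def)

lemma norm_steer_nth: "cmod (steer lam x y u v $ n) = 1"
  by (simp add: steer_def)

lemma steer_mat_axis: "steer_mat lam x y u v *v axis k 1 = steer lam x y (u k) (v k)"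
  by (simp add: vec_eq_iff matrix_vector_mult_def axis_def steer_mat_def if_distrib[of "(*) _"]
      cong: if_cong)

theorem mainTheorem3:
  fixes lam :: real and x y :: "'n::finite \<Rightarrow> real" and u v :: "'k::finite \<Rightarrow> real" and k :: 'k
  assumes "CARD('n) > CARD('k)"
    and "lam > 0"
    and "rank (steer_mat lam x y u v) = CARD('k)"
    and "var x > 0" and "var y > 0"
    and "proj_perp (steer_mat lam x y u v) *v steer_du lam x y (u k) (v k) \<noteq> 0"
    and "proj_perp (steer_mat lam x y u v) *v steer_dv lam x y (u k) (v k) \<noteq> 0"
  shows "omega_u lam x y u v k \<le> 4 * pi^2 * real CARD('n) / lam^2 * (var x - (cov x y)^2 / var y)
    \<and> omega_v lam x y u v k \<le> 4 * pi^2 * real CARD('n) / lam^2 * (var y - (cov x y)^2 / var x)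
    \<and> (omega_u lam x y u v k = 4 * pi^2 * real CARD('n) / lam^2 * (var x - (cov x y)^2 / var y)
         \<longleftrightarrow> hermitian_transpose (steer_mat lam x y u v) *v
               (proj_perp_vec (steer lam x y (u k) (v k)) *v
                 (steer_du lam x y (u k) (v k) - complex_of_real (zeta_u lam x y (u k) (v k)) *s steer_dv lam x y (u k) (v k))) = 0)
    \<and> (omega_v lam x y u v k = 4 * pi^2 * real CARD('n) / lam^2 * (var y - (cov x y)^2 / var x)
         \<longleftrightarrow> hermitian_transpose (steer_mat lam x y u v) *v
               (proj_perp_vec (steer lam x y (u k) (v k)) *v
                 (steer_dv lam x y (u k) (v k) - complex_of_real (zeta_v lam x y (u k) (v k)) *s steer_du lam x y (u k) (v k))) = 0)"
proof -
  let ?A = "steer_mat lam x y u v" and ?a = "steer lam x y (u k) (v k)" and ?c = "2 * pi / lam"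
  have gram: "invertible (hermitian_transpose ?A ** ?A)"
    using assms(3) by (rule invertible_gram_matrix)
  have annihilated: "proj_perp ?A *v ?a = 0"
    using proj_perp_range[OF gram, of "axis k 1"] by (simp add: steer_mat_axis)
  have c: "?c\<^sup>2 * real CARD('n) \<noteq> 0"
    using assms(2) by simp
  have zeta: "zeta_u lam x y (u k) (v k) = cov x y / var y" "zeta_v lam x y (u k) (v k) = cov x y / var x"
    using c by (simp_all add: zeta_u_def zeta_v_def steer_du_eq_weighted_steer steer_dv_eq_weighted_steer
        Re_cinner_proj_perp_vec_weighted_steer normsq_proj_perp_vec_weighted_steer norm_steer_nth
        cov_commute[of y x])
  have scale: "4 * pi\<^sup>2 * real CARD('n) / lam\<^sup>2 = ?c\<^sup>2 * real CARD('n)"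
    by (simp add: power_divide)
  show ?thesis
    unfolding omega_u_def omega_v_def zeta scale steer_du_eq_weighted_steer steer_dv_eq_weighted_steer
      proj_perp_vec_weighted_steer_diff[OF norm_steer_nth]
    using INF_proj_perp_weighted_steer[OF gram norm_steer_nth annihilated assms(5), of ?c x]
      INF_proj_perp_weighted_steer[OF gram norm_steer_nth annihilated assms(4), of ?c y]
    by (simp add: cov_commute[of y x])
qed

end
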